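(* Let $(W,S)$ be a Coxeter system with $S$ finite, $\phi:\operatorname{Ad}(Q_W)\to W$ the homomorphism $e_x\mapsto x$, and $C_W=\ker\phi$. Then the rank of the abelian group $C_W$ (i.e. $\dim_{\mathbb{Q}}(C_W\otimes\mathbb{Q})$) equals $c(W)$, the number of $W$-conjugacy classes of elements of $Q_W$.
   Context: A Coxeter system $(W,S)$: $S$ finite, $m:S\times S\to\mathbb{N}\cup\{\infty\}$ with $m(s,s)=1$, $2\le m(s,t)=m(t,s)\le\infty$ for $s\ne t$, $W=\langle s\in S\mid (st)^{m(s,t)}=1\ (m(s,t)<\infty)\rangle$. The Coxeter quandle is $Q_W=\bigcup_{w\in W}w^{-1}Sw$ with $x\ast y=yxy$, and $\operatorname{Ad}(Q_W)=\langle e_x\ (x\in Q_W)\mid e_y^{-1}e_xe_y=e_{x\ast y}\rangle$. $C_W$ is a central (hence abelian) subgroup of $\operatorname{Ad}(Q_W)$. *)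

theory Defs
  imports "HOL-Algebra.Algebra" "HOL-Library.Extended_Nat"
begin

text \<open>Words over a generator set A: letters (a, True) = a, (a, False) = a inverse.\<close>

definition pres_words :: "'a set \<Rightarrow> ('a \<times> bool) list set" where
  "pres_words A = {w. \<forall>p \<in> set w. fst p \<in> A}"

inductive_set pres_rel :: "'a set \<Rightarrow> ('a \<times> bool) list set \<Rightarrow>
    (('a \<times> bool) list \<times> ('a \<times> bool) list) set"
  for A :: "'a set" and R :: "('a \<times> bool) list set" where
  pr_refl: "w \<in> pres_words A \<Longrightarrow> (w, w) \<in> pres_rel A R"
| pr_sym: "(u, v) \<in> pres_rel A R \<Longrightarrow> (v, u) \<in> pres_rel A R"
| pr_trans: "(u, v) \<in> pres_rel A R \<Longrightarrow> (v, w) \<in> pres_rel A R \<Longrightarrow> (u, w) \<in> pres_rel A R"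
| pr_cancel: "x \<in> pres_words A \<Longrightarrow> y \<in> pres_words A \<Longrightarrow> a \<in> A \<Longrightarrow>
      (x @ [(a, b), (a, \<not> b)] @ y, x @ y) \<in> pres_rel A R"
| pr_relator: "x \<in> pres_words A \<Longrightarrow> y \<in> pres_words A \<Longrightarrow> r \<in> R \<Longrightarrow> r \<in> pres_words A \<Longrightarrow>
      (x @ r @ y, x @ y) \<in> pres_rel A R"

definition presented_group :: "'a set \<Rightarrow> ('a \<times> bool) list set \<Rightarrow> ('a \<times> bool) list set monoid" where
  "presented_group A R =
     \<lparr> carrier = pres_words A // pres_rel A R,
       monoid.mult = (\<lambda>U V. pres_rel A R `` {(SOME u. u \<in> U) @ (SOME v. v \<in> V)}),
       monoid.one = pres_rel A R `` {[]} \<rparr>"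

definition pres_gen :: "'a set \<Rightarrow> ('a \<times> bool) list set \<Rightarrow> 'a \<Rightarrow> ('a \<times> bool) list set" where
  "pres_gen A R a = pres_rel A R `` {[(a, True)]}"

definition word_eval :: "('b, 'm) monoid_scheme \<Rightarrow> ('a \<Rightarrow> 'b) \<Rightarrow> ('a \<times> bool) list \<Rightarrow> 'b" where
  "word_eval G f w =
     foldr (\<lambda>p acc. (if snd p then f (fst p) else inv\<^bsub>G\<^esub> (f (fst p))) \<otimes>\<^bsub>G\<^esub> acc) w \<one>\<^bsub>G\<^esub>"

text \<open>m(s,t) in \<open>\<nat> \<union> {\<infinity>}\<close> modelled by enat.\<close>

definition coxeter_system :: "'g set \<Rightarrow> ('g \<Rightarrow> 'g \<Rightarrow> enat) \<Rightarrow> bool" where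
  "coxeter_system S m \<longleftrightarrow> finite S \<and> (\<forall>s \<in> S. m s s = 1) \<and>
     (\<forall>s \<in> S. \<forall>t \<in> S. s \<noteq> t \<longrightarrow> 2 \<le> m s t \<and> m s t = m t s)"

definition cox_rels :: "'g set \<Rightarrow> ('g \<Rightarrow> 'g \<Rightarrow> enat) \<Rightarrow> ('g \<times> bool) list set" where
  "cox_rels S m = {concat (replicate k [(s, True), (t, True)]) | s t k.
                     s \<in> S \<and> t \<in> S \<and> m s t = enat k}"

definition coxeter_group :: "'g set \<Rightarrow> ('g \<Rightarrow> 'g \<Rightarrow> enat) \<Rightarrow> ('g \<times> bool) list set monoid" where
  "coxeter_group S m = presented_group S (cox_rels S m)"

definition coxeter_quandle :: "'g set \<Rightarrow> ('g \<Rightarrow> 'g \<Rightarrow> enat) \<Rightarrow> ('g \<times> bool) list set set" where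
  "coxeter_quandle S m =
     {inv\<^bsub>coxeter_group S m\<^esub> w \<otimes>\<^bsub>coxeter_group S m\<^esub> pres_gen S (cox_rels S m) s
        \<otimes>\<^bsub>coxeter_group S m\<^esub> w | w s. w \<in> carrier (coxeter_group S m) \<and> s \<in> S}"

definition quandle_op :: "('b, 'm) monoid_scheme \<Rightarrow> 'b \<Rightarrow> 'b \<Rightarrow> 'b" where
  "quandle_op G x y = y \<otimes>\<^bsub>G\<^esub> x \<otimes>\<^bsub>G\<^esub> y"

definition ad_rels :: "'g set \<Rightarrow> ('g \<Rightarrow> 'g \<Rightarrow> enat) \<Rightarrow>
    (('g \<times> bool) list set \<times> bool) list set" where
  "ad_rels S m = {[(y, False), (x, True), (y, True), (quandle_op (coxeter_group S m) x y, False)] | x y.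
                    x \<in> coxeter_quandle S m \<and> y \<in> coxeter_quandle S m}"

definition adjoint_group :: "'g set \<Rightarrow> ('g \<Rightarrow> 'g \<Rightarrow> enat) \<Rightarrow>
    (('g \<times> bool) list set \<times> bool) list set monoid" where
  "adjoint_group S m = presented_group (coxeter_quandle S m) (ad_rels S m)"

definition ad_phi :: "'g set \<Rightarrow> ('g \<Rightarrow> 'g \<Rightarrow> enat) \<Rightarrow>
    (('g \<times> bool) list set \<times> bool) list set \<Rightarrow> ('g \<times> bool) list set" where
  "ad_phi S m U = word_eval (coxeter_group S m) id (SOME u. u \<in> U)"

definition C_W :: "'g set \<Rightarrow> ('g \<Rightarrow> 'g \<Rightarrow> enat) \<Rightarrow> (('g \<times> bool) list set \<times> bool) list set set" where
  "C_W S m = kernel (adjoint_group S m) (coxeter_group S m) (ad_phi S m)"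

definition conj_class :: "('b, 'm) monoid_scheme \<Rightarrow> 'b \<Rightarrow> 'b set" where
  "conj_class G x = {inv\<^bsub>G\<^esub> g \<otimes>\<^bsub>G\<^esub> x \<otimes>\<^bsub>G\<^esub> g | g. g \<in> carrier G}"

definition Z_independent :: "('b, 'm) monoid_scheme \<Rightarrow> 'b set \<Rightarrow> bool" where
  "Z_independent G B \<longleftrightarrow> B \<subseteq> carrier G \<and> finite B \<and>
     (\<forall>n :: 'b \<Rightarrow> int. finprod G (\<lambda>x. pow G x (n x)) B = \<one>\<^bsub>G\<^esub> \<longrightarrow> (\<forall>x \<in> B. n x = 0))"

text \<open>The (torsion-free) rank of an abelian group is r: the maximal size of a
  \<open>\<int>\<close>-independent subset is r (equivalently \<open>dim_\<rat> (G \<otimes> \<rat>) = r\<close>).\<close>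

definition has_rank :: "('b, 'm) monoid_scheme \<Rightarrow> nat \<Rightarrow> bool" where
  "has_rank G r \<longleftrightarrow> (\<exists>B. Z_independent G B \<and> card B = r) \<and>
     (\<forall>B. Z_independent G B \<longrightarrow> card B \<le> r)"

end

theory Submission
  imports Defs
begin

(*
  Conjugation in Ad(Q_W) acts on the generators through phi:
  g^-1 e_x g = e_y with y = phi(g)^-1 x phi(g).  Hence C_W = ker phi is central, and each
  square e_x^2, which lies in C_W, depends only on the W-conjugacy class of x.  Modulo the
  subgroup N generated by these c(W) squares the e_x become involutions compatible with
  x |-> y x y, so the braid relations of W hold there and s |-> e_s defines a homomorphism
  theta : W -> Ad/N with theta o phi equal to the quotient map; thus C_W = N.  The
  homomorphism Ad -> Z^c(W) counting generators by conjugacy class sends the square of a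
  class k to twice the k-th unit vector and is injective on N, so C_W is free abelian on the
  c(W) squares.
*)

section \<open>Presented groups\<close>

lemma pres_rel_words:
  assumes "(u, v) \<in> pres_rel A R" shows "u \<in> pres_words A \<and> v \<in> pres_words A"
  using assms by induct (auto simp: pres_words_def)

lemma pres_words_append [simp]:
  "xs @ ys \<in> pres_words A \<longleftrightarrow> xs \<in> pres_words A \<and> ys \<in> pres_words A"
  by (auto simp: pres_words_def)

lemma pres_words_Cons [simp]: "p # ys \<in> pres_words A \<longleftrightarrow> fst p \<in> A \<and> ys \<in> pres_words A"
  by (auto simp: pres_words_def)

lemma pres_words_Nil [simp]: "[] \<in> pres_words A"
  by (auto simp: pres_words_def)

lemma pres_equiv: "equiv (pres_words A) (pres_rel A R)"
proof -
  have "pres_rel A R \<subseteq> pres_words A \<times> pres_words A"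
    by (auto dest: pres_rel_words)
  then show ?thesis
    unfolding equiv_def refl_on_def sym_def trans_def by (blast intro: pres_rel.intros)
qed

lemma pres_cong_left:
  assumes "(u, v) \<in> pres_rel A R" "w \<in> pres_words A"
  shows "(w @ u, w @ v) \<in> pres_rel A R"
  using assms(1)
proof induct
  case (pr_cancel x y a b)
  then show ?case using pres_rel.pr_cancel[where x="w @ x" and y=y and a=a and b=b] assms(2) by simp
next
  case (pr_relator x y r)
  then show ?case using pres_rel.pr_relator[where x="w @ x" and y=y and r=r] assms(2) by simp
qed (auto intro: pres_rel.intros simp: assms)

lemma pres_cong_right:
  assumes "(u, v) \<in> pres_rel A R" "w \<in> pres_words A"
  shows "(u @ w, v @ w) \<in> pres_rel A R"
  using assms(1)
proof induct
  case (pr_cancel x y a b)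
  then show ?case using pres_rel.pr_cancel[where x=x and y="y @ w" and a=a and b=b] assms(2) by simp
next
  case (pr_relator x y r)
  then show ?case using pres_rel.pr_relator[where x=x and y="y @ w" and r=r] assms(2) by simp
qed (auto intro: pres_rel.intros simp: assms)

lemma pres_cong:
  assumes "(u, v) \<in> pres_rel A R" "(u', v') \<in> pres_rel A R"
  shows "(u @ u', v @ v') \<in> pres_rel A R"
proof (rule pres_rel.pr_trans)
  show "(u @ u', v @ u') \<in> pres_rel A R"
    using pres_cong_right assms pres_rel_words by blast
  show "(v @ u', v @ v') \<in> pres_rel A R"
    using pres_cong_left assms pres_rel_words by blast
qed

lemma pres_class_eq: "(u, v) \<in> pres_rel A R \<Longrightarrow> pres_rel A R `` {u} = pres_rel A R `` {v}"
  by (rule equiv_class_eq[OF pres_equiv])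

lemma pres_self: "u \<in> pres_words A \<Longrightarrow> u \<in> pres_rel A R `` {u}"
  using pres_rel.pr_refl by blast

lemma pres_carrier: "carrier (presented_group A R) = pres_words A // pres_rel A R"
  by (simp add: presented_group_def)

lemma pres_class_in: "u \<in> pres_words A \<Longrightarrow> pres_rel A R `` {u} \<in> carrier (presented_group A R)"
  by (simp add: pres_carrier quotientI)

lemma pres_one: "\<one>\<^bsub>presented_group A R\<^esub> = pres_rel A R `` {[]}"
  by (simp add: presented_group_def)

lemma pres_mult:
  assumes "u \<in> pres_words A" "v \<in> pres_words A"
  shows "pres_rel A R `` {u} \<otimes>\<^bsub>presented_group A R\<^esub> pres_rel A R `` {v}
       = pres_rel A R `` {u @ v}"
proof -
  let ?U = "pres_rel A R `` {u}" and ?V = "pres_rel A R `` {v}"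
  have "(u, SOME x. x \<in> ?U) \<in> pres_rel A R" "(v, SOME x. x \<in> ?V) \<in> pres_rel A R"
    using someI[of "\<lambda>x. x \<in> ?U" u] someI[of "\<lambda>x. x \<in> ?V" v] pres_self assms by blast+
  then have "(u @ v, (SOME x. x \<in> ?U) @ (SOME x. x \<in> ?V)) \<in> pres_rel A R"
    by (rule pres_cong)
  then show ?thesis by (simp add: presented_group_def pres_class_eq)
qed

definition inv_word :: "('a \<times> bool) list \<Rightarrow> ('a \<times> bool) list" where
  "inv_word u = rev (map (\<lambda>p. (fst p, \<not> snd p)) u)"

lemma inv_word_words [simp]: "inv_word u \<in> pres_words A \<longleftrightarrow> u \<in> pres_words A"
  by (auto simp: inv_word_def pres_words_def)

lemma inv_word_Cons: "inv_word (p # u) = inv_word u @ [(fst p, \<not> snd p)]"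
  by (simp add: inv_word_def)

lemma inv_word_left: "u \<in> pres_words A \<Longrightarrow> (inv_word u @ u, []) \<in> pres_rel A R"
proof (induct u)
  case Nil
  then show ?case by (simp add: inv_word_def pres_rel.pr_refl)
next
  case (Cons p u)
  obtain a b where p: "p = (a, b)" by force
  have a: "a \<in> A" "u \<in> pres_words A" using Cons p by auto
  have "(inv_word u @ [(a, \<not> b), (a, \<not> \<not> b)] @ u, inv_word u @ u) \<in> pres_rel A R"
    using pres_rel.pr_cancel[where x="inv_word u" and y=u and a=a and b="\<not> b" and R=R] a by simp
  then show ?case
    using Cons a p by (simp add: inv_word_Cons pres_rel.pr_trans)
qed

lemma presented_group_is_group: "group (presented_group A R)"
proof (rule groupI)
  fix x y
  assume "x \<in> carrier (presented_group A R)" "y \<in> carrier (presented_group A R)"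
  then show "x \<otimes>\<^bsub>presented_group A R\<^esub> y \<in> carrier (presented_group A R)"
    by (auto simp: pres_carrier quotient_def pres_mult intro: pres_class_in[simplified pres_carrier])
next
  show "\<one>\<^bsub>presented_group A R\<^esub> \<in> carrier (presented_group A R)"
    by (simp add: pres_one pres_class_in)
next
  fix x y z
  assume "x \<in> carrier (presented_group A R)" "y \<in> carrier (presented_group A R)"
    "z \<in> carrier (presented_group A R)"
  then show "x \<otimes>\<^bsub>presented_group A R\<^esub> y \<otimes>\<^bsub>presented_group A R\<^esub> z =
      x \<otimes>\<^bsub>presented_group A R\<^esub> (y \<otimes>\<^bsub>presented_group A R\<^esub> z)"
    by (auto simp: pres_carrier quotient_def pres_mult)
next
  fix x
  assume "x \<in> carrier (presented_group A R)"
  then show "\<one>\<^bsub>presented_group A R\<^esub> \<otimes>\<^bsub>presented_group A R\<^esub> x = x"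
    by (auto simp: pres_carrier quotient_def pres_mult pres_one)
next
  fix x
  assume "x \<in> carrier (presented_group A R)"
  then obtain u where u: "u \<in> pres_words A" "x = pres_rel A R `` {u}"
    by (auto simp: pres_carrier quotient_def)
  show "\<exists>y\<in>carrier (presented_group A R). y \<otimes>\<^bsub>presented_group A R\<^esub> x = \<one>\<^bsub>presented_group A R\<^esub>"
    by (rule bexI[of _ "pres_rel A R `` {inv_word u}"])
       (auto simp: u pres_mult pres_one pres_class_in inv_word_left pres_class_eq)
qed

lemma pres_gen_in: "a \<in> A \<Longrightarrow> pres_gen A R a \<in> carrier (presented_group A R)"
  by (simp add: pres_gen_def pres_class_in)

lemma word_eval_Nil [simp]: "word_eval G f [] = \<one>\<^bsub>G\<^esub>"
  by (simp add: word_eval_def)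

lemma word_eval_Cons:
  "word_eval G f (p # u) =
     (if snd p then f (fst p) else inv\<^bsub>G\<^esub> (f (fst p))) \<otimes>\<^bsub>G\<^esub> word_eval G f u"
  by (simp add: word_eval_def)

lemma word_eval_cong:
  "(\<And>a. a \<in> A \<Longrightarrow> f a = g a) \<Longrightarrow> u \<in> pres_words A \<Longrightarrow> word_eval G f u = word_eval G g u"
  by (induct u) (auto simp: word_eval_Cons)

lemma (in group) word_eval_closed:
  "f ` A \<subseteq> carrier G \<Longrightarrow> u \<in> pres_words A \<Longrightarrow> word_eval G f u \<in> carrier G"
  by (induct u) (auto simp: word_eval_Cons)

lemma (in group) word_eval_append:
  "f ` A \<subseteq> carrier G \<Longrightarrow> u \<in> pres_words A \<Longrightarrow> v \<in> pres_words A \<Longrightarrow>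
   word_eval G f (u @ v) = word_eval G f u \<otimes> word_eval G f v"
  by (induct u) (auto simp: word_eval_Cons m_assoc word_eval_closed image_subset_iff)

lemma (in group) word_eval_replicate_pair:
  "f s \<in> carrier G \<Longrightarrow> f t \<in> carrier G \<Longrightarrow>
   word_eval G f (concat (replicate k [(s, True), (t, True)])) = (f s \<otimes> f t) [^] k"
proof (induct k)
  case (Suc k)
  then have "(f s \<otimes> f t) [^] Suc k = f s \<otimes> f t \<otimes> (f s \<otimes> f t) [^] k"
    by (intro nat_pow_Suc2) simp
  then show ?case using Suc by (simp add: word_eval_Cons m_assoc)
qed simp

lemma (in group) word_eval_resp:
  assumes f: "f ` A \<subseteq> carrier G"
    and rel: "\<And>r. r \<in> R \<Longrightarrow> r \<in> pres_words A \<Longrightarrow> word_eval G f r = \<one>"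
    and "(u, v) \<in> pres_rel A R"
  shows "word_eval G f u = word_eval G f v"
  using assms(3)
proof induct
  case (pr_cancel x y a b)
  then have "word_eval G f [(a, b), (a, \<not> b)] = \<one>"
    using f by (auto simp: word_eval_Cons)
  then show ?case
    using pr_cancel f by (simp add: word_eval_append word_eval_closed del: append.simps)
next
  case (pr_relator x y r)
  then show ?case using f rel by (simp add: word_eval_append word_eval_closed)
qed auto

definition pres_lift :: "('b, 'm) monoid_scheme \<Rightarrow> ('a \<Rightarrow> 'b) \<Rightarrow> ('a \<times> bool) list set \<Rightarrow> 'b" where
  "pres_lift G f U = word_eval G f (SOME u. u \<in> U)"

context group
begin

context
  fixes A R f
  assumes f: "f ` A \<subseteq> carrier G"
    and rel: "\<And>r. r \<in> R \<Longrightarrow> r \<in> pres_words A \<Longrightarrow> word_eval G f r = \<one>"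
begin

lemma pres_lift_class:
  assumes "u \<in> pres_words A"
  shows "pres_lift G f (pres_rel A R `` {u}) = word_eval G f u"
proof -
  have "(SOME x. x \<in> pres_rel A R `` {u}) \<in> pres_rel A R `` {u}"
    using pres_self[OF assms] by (rule someI)
  then show ?thesis
    unfolding pres_lift_def using word_eval_resp[OF f rel] by simp
qed

lemma pres_lift_hom: "pres_lift G f \<in> hom (presented_group A R) G"
proof (rule homI)
  fix x
  assume "x \<in> carrier (presented_group A R)"
  then obtain u where "u \<in> pres_words A" "x = pres_rel A R `` {u}"
    by (auto simp: pres_carrier quotient_def)
  then show "pres_lift G f x \<in> carrier G"
    using pres_lift_class word_eval_closed[OF f] by simp
next
  fix x y
  assume "x \<in> carrier (presented_group A R)" "y \<in> carrier (presented_group A R)"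
  then obtain u v where "u \<in> pres_words A" "x = pres_rel A R `` {u}"
    and "v \<in> pres_words A" "y = pres_rel A R `` {v}"
    by (auto simp: pres_carrier quotient_def)
  then show "pres_lift G f (x \<otimes>\<^bsub>presented_group A R\<^esub> y) = pres_lift G f x \<otimes> pres_lift G f y"
    by (simp add: pres_mult pres_lift_class word_eval_append[OF f])
qed

lemma pres_lift_gen: "a \<in> A \<Longrightarrow> pres_lift G f (pres_gen A R a) = f a"
  using pres_lift_class[of "[(a, True)]"] f by (auto simp: pres_gen_def word_eval_Cons)

end

end

lemma pres_class_word_eval:
  assumes "u \<in> pres_words A"
  shows "pres_rel A R `` {u} = word_eval (presented_group A R) (pres_gen A R) u"
  using assms
proof (induct u)
  case Nil
  then show ?case by (simp add: pres_one)
next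
  case (Cons p u)
  interpret P: group "presented_group A R" by (rule presented_group_is_group)
  obtain a b where p: "p = (a, b)" by force
  have a: "a \<in> A" "u \<in> pres_words A" using Cons p by auto
  have inv_gen: "pres_rel A R `` {[(a, False)]} = inv\<^bsub>presented_group A R\<^esub> pres_gen A R a"
  proof (rule P.inv_equality[symmetric])
    show "pres_rel A R `` {[(a, False)]} \<otimes>\<^bsub>presented_group A R\<^esub> pres_gen A R a
        = \<one>\<^bsub>presented_group A R\<^esub>"
      using pres_rel.pr_cancel[where x="[]" and y="[]" and a=a and b=False and R=R] a
      by (simp add: pres_gen_def pres_one pres_mult pres_class_eq)
  qed (simp_all add: a pres_gen_in pres_class_in)
  have "pres_rel A R `` {p # u} = pres_rel A R `` {[p]} \<otimes>\<^bsub>presented_group A R\<^esub> pres_rel A R `` {u}"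
    using pres_mult[of "[p]" A u R] a p by simp
  then show ?case
    using Cons a p inv_gen by (cases b) (simp_all add: word_eval_Cons pres_gen_def)
qed

lemma pres_carrierE:
  assumes "x \<in> carrier (presented_group A R)"
  obtains u where "u \<in> pres_words A" "x = word_eval (presented_group A R) (pres_gen A R) u"
  using assms pres_class_word_eval unfolding pres_carrier by (blast elim: quotientE)

lemma pres_relator:
  assumes "r \<in> R" "r \<in> pres_words A"
  shows "word_eval (presented_group A R) (pres_gen A R) r = \<one>\<^bsub>presented_group A R\<^esub>"
  using pres_rel.pr_relator[where x="[]" and y="[]" and r=r and A=A and R=R] assms
  by (simp add: pres_class_word_eval[symmetric] pres_one pres_class_eq)

lemma hom_word_eval:
  assumes "group G" "group H" "h \<in> hom G H" "g ` A \<subseteq> carrier G" "u \<in> pres_words A"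
  shows "h (word_eval G g u) = word_eval H (h \<circ> g) u"
proof -
  interpret group_hom G H h
    using assms by (simp add: group_hom_def group_hom_axioms_def)
  show ?thesis
    using assms(5)
  proof (induct u)
    case (Cons p u)
    then have "word_eval G g u \<in> carrier G" "g (fst p) \<in> carrier G"
      using assms(4) G.word_eval_closed by auto
    then show ?case
      using Cons by (simp add: word_eval_Cons)
  qed simp
qed

lemma pres_hom_unique:
  assumes "group H" "h1 \<in> hom (presented_group A R) H" "h2 \<in> hom (presented_group A R) H"
    "\<And>a. a \<in> A \<Longrightarrow> h1 (pres_gen A R a) = h2 (pres_gen A R a)"
    "x \<in> carrier (presented_group A R)"
  shows "h1 x = h2 x"
proof -
  obtain u where u: "u \<in> pres_words A" "x = word_eval (presented_group A R) (pres_gen A R) u"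
    using assms(5) by (rule pres_carrierE)
  have gen: "pres_gen A R ` A \<subseteq> carrier (presented_group A R)"
    by (rule image_subsetI) (rule pres_gen_in)
  have "h1 x = word_eval H (h1 \<circ> pres_gen A R) u"
    unfolding u(2) by (rule hom_word_eval[OF presented_group_is_group assms(1,2) gen u(1)])
  also have "\<dots> = word_eval H (h2 \<circ> pres_gen A R) u"
    by (rule word_eval_cong[OF _ u(1)]) (simp add: assms(4))
  also have "\<dots> = h2 x"
    unfolding u(2) by (rule hom_word_eval[OF presented_group_is_group assms(1,3) gen u(1), symmetric])
  finally show ?thesis .
qed

section \<open>Conjugation and braid relations in groups\<close>

lemma (in group) inv_mult_cancel_left [simp]:
  "x \<in> carrier G \<Longrightarrow> y \<in> carrier G \<Longrightarrow> inv x \<otimes> (x \<otimes> y) = y"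
  by (simp add: m_assoc[symmetric])

lemma (in group) mult_inv_cancel_left [simp]:
  "x \<in> carrier G \<Longrightarrow> y \<in> carrier G \<Longrightarrow> x \<otimes> (inv x \<otimes> y) = y"
  by (simp add: m_assoc[symmetric])

lemma (in group) conj_class_conj:
  assumes "x \<in> carrier G" "g \<in> carrier G"
  shows "conj_class G (inv g \<otimes> x \<otimes> g) = conj_class G x"
proof (intro equalityI subsetI)
  fix y
  assume "y \<in> conj_class G (inv g \<otimes> x \<otimes> g)"
  then obtain h where h: "h \<in> carrier G" "y = inv h \<otimes> (inv g \<otimes> x \<otimes> g) \<otimes> h"
    by (auto simp: conj_class_def)
  then have "y = inv (g \<otimes> h) \<otimes> x \<otimes> (g \<otimes> h)"
    using assms by (simp add: inv_mult_group m_assoc)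
  then show "y \<in> conj_class G x"
    using h assms unfolding conj_class_def by blast
next
  fix y
  assume "y \<in> conj_class G x"
  then obtain h where h: "h \<in> carrier G" "y = inv h \<otimes> x \<otimes> h"
    by (auto simp: conj_class_def)
  then have "y = inv (inv g \<otimes> h) \<otimes> (inv g \<otimes> x \<otimes> g) \<otimes> (inv g \<otimes> h)"
    using assms by (simp add: inv_mult_group m_assoc)
  then show "y \<in> conj_class G (inv g \<otimes> x \<otimes> g)"
    using h assms unfolding conj_class_def by blast
qed

lemma (in group) conj_class_self: "x \<in> carrier G \<Longrightarrow> x \<in> conj_class G x"
  unfolding conj_class_def by (rule CollectI, rule exI[of _ \<one>]) simp

definition mult_list :: "('a, 'm) monoid_scheme \<Rightarrow> 'a list \<Rightarrow> 'a" where
  "mult_list G xs = foldr (\<otimes>\<^bsub>G\<^esub>) xs \<one>\<^bsub>G\<^esub>"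

lemma mult_list_Nil [simp]: "mult_list G [] = \<one>\<^bsub>G\<^esub>"
  by (simp add: mult_list_def)

lemma mult_list_Cons [simp]: "mult_list G (x # xs) = x \<otimes>\<^bsub>G\<^esub> mult_list G xs"
  by (simp add: mult_list_def)

lemma (in monoid) mult_list_closed: "set xs \<subseteq> carrier G \<Longrightarrow> mult_list G xs \<in> carrier G"
  by (induct xs) auto

lemma (in monoid) mult_list_append:
  "set xs \<subseteq> carrier G \<Longrightarrow> set ys \<subseteq> carrier G \<Longrightarrow>
   mult_list G (xs @ ys) = mult_list G xs \<otimes> mult_list G ys"
  by (induct xs) (auto simp: m_assoc mult_list_closed)

lemma (in group) inv_mult_list_involutions:
  assumes "\<And>x. x \<in> set xs \<Longrightarrow> x \<in> carrier G \<and> x \<otimes> x = \<one>"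
  shows "inv (mult_list G xs) = mult_list G (rev xs)"
  using assms
proof (induct xs)
  case (Cons x xs)
  then have x: "x \<in> carrier G" "inv x = x" and xs: "set xs \<subseteq> carrier G"
    using inv_equality by auto
  then have "inv (mult_list G (x # xs)) = mult_list G (rev xs) \<otimes> mult_list G [x]"
    using Cons by (simp add: inv_mult_group mult_list_closed)
  also have "\<dots> = mult_list G (rev xs @ [x])"
    by (rule mult_list_append[symmetric]) (use x xs in auto)
  finally show ?case by simp
qed simp

fun alternating :: "'a \<Rightarrow> 'a \<Rightarrow> nat \<Rightarrow> 'a list" where
  "alternating x y 0 = []"
| "alternating x y (Suc n) = x # alternating y x n"

lemma alternating_set: "set (alternating x y n) \<subseteq> {x, y}"
  by (induct n arbitrary: x y) auto

lemma map_alternating: "map f (alternating x y n) = alternating (f x) (f y) n"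
  by (induct n arbitrary: x y) auto

lemma alternating_add:
  "alternating x y (n1 + n2) =
     alternating x y n1 @ (if even n1 then alternating x y n2 else alternating y x n2)"
  by (induct n1 arbitrary: x y) auto

lemma alternating_Suc_snoc:
  "alternating x y (Suc n) = alternating x y n @ (if even n then [x] else [y])"
  using alternating_add[of x y n 1] by simp

lemma rev_alternating:
  "rev (alternating x y n) = (if even n then alternating y x n else alternating x y n)"
proof (induct n arbitrary: x y)
  case (Suc n)
  then show ?case
    using alternating_Suc_snoc[of x y n] alternating_Suc_snoc[of y x n] by auto
qed simp

lemma alternating_odd:
  "alternating x y (Suc (2 * j)) =
     alternating x y j @ [if even j then x else y] @ rev (alternating x y j)"
proof -
  have "alternating x y (Suc (2 * j)) = alternating x y (j + Suc j)"
    by (simp add: mult_2)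
  also have "\<dots> = alternating x y j @ (if even j then alternating x y (Suc j) else alternating y x (Suc j))"
    by (rule alternating_add)
  finally show ?thesis
    by (simp add: rev_alternating)
qed

lemma (in monoid) mult_list_alternating_double:
  "x \<in> carrier G \<Longrightarrow> y \<in> carrier G \<Longrightarrow> mult_list G (alternating x y (2 * k)) = (x \<otimes> y) [^] k"
proof (induct k)
  case (Suc k)
  then have "(x \<otimes> y) [^] Suc k = x \<otimes> y \<otimes> (x \<otimes> y) [^] k"
    by (intro nat_pow_Suc2) simp
  then show ?case
    using Suc by (simp add: numeral_2_eq_2 m_assoc)
qed simp

lemma (in group) braid_iff:
  assumes x: "x \<in> carrier G" "x \<otimes> x = \<one>" and y: "y \<in> carrier G" "y \<otimes> y = \<one>"
  shows "mult_list G (alternating x y k) = mult_list G (alternating y x k) \<longleftrightarrow> (x \<otimes> y) [^] k = \<one>"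
proof -
  let ?P = "mult_list G (alternating x y k)" and ?Q = "mult_list G (alternating y x k)"
  have sets: "set (alternating x y n) \<subseteq> carrier G" "set (alternating y x n) \<subseteq> carrier G" for n
    using alternating_set[of x y n] alternating_set[of y x n] x y by auto
  then have P: "?P \<in> carrier G" "?Q \<in> carrier G"
    by (simp_all add: mult_list_closed)
  have "inv ?Q = mult_list G (rev (alternating y x k))"
    by (rule inv_mult_list_involutions) (use alternating_set[of y x k] x y in auto)
  then have inv_Q: "inv ?Q = (if even k then ?P else ?Q)"
    by (simp add: rev_alternating)
  have "(x \<otimes> y) [^] k = mult_list G (alternating x y (k + k))"
    using mult_list_alternating_double[OF x(1) y(1), of k] by (simp add: mult_2)
  also have "\<dots> = ?P \<otimes> inv ?Q"
    using sets inv_Q by (simp add: alternating_add mult_list_append)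
  finally have "(x \<otimes> y) [^] k = ?P \<otimes> inv ?Q" .
  then show ?thesis
    using P by (metis inv_closed inv_equality inv_inv r_inv)
qed

text \<open>A map from reflections to involutions that respects \<open>x \<triangleright> y = y x y\<close>
  carries the braid relations between reflections over to H.\<close>

locale involution_rep =
  W: group W + H: group H
  for W :: "('w, 'a) monoid_scheme" and H :: "('h, 'b) monoid_scheme" +
  fixes Q :: "'w set" and f :: "'w \<Rightarrow> 'h"
  assumes Q_closed: "Q \<subseteq> carrier W"
    and Q_involution: "x \<in> Q \<Longrightarrow> x \<otimes>\<^bsub>W\<^esub> x = \<one>\<^bsub>W\<^esub>"
    and Q_reflect: "x \<in> Q \<Longrightarrow> y \<in> Q \<Longrightarrow> y \<otimes>\<^bsub>W\<^esub> x \<otimes>\<^bsub>W\<^esub> y \<in> Q"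
    and f_closed: "x \<in> Q \<Longrightarrow> f x \<in> carrier H"
    and f_involution: "x \<in> Q \<Longrightarrow> f x \<otimes>\<^bsub>H\<^esub> f x = \<one>\<^bsub>H\<^esub>"
    and f_reflect: "x \<in> Q \<Longrightarrow> y \<in> Q \<Longrightarrow>
      f y \<otimes>\<^bsub>H\<^esub> f x \<otimes>\<^bsub>H\<^esub> f y = f (y \<otimes>\<^bsub>W\<^esub> x \<otimes>\<^bsub>W\<^esub> y)"
begin

lemma Q_inv: "x \<in> Q \<Longrightarrow> inv\<^bsub>W\<^esub> x = x"
  using Q_closed Q_involution W.inv_equality by blast

lemma f_inv: "x \<in> Q \<Longrightarrow> inv\<^bsub>H\<^esub> f x = f x"
  using f_closed f_involution H.inv_equality by blast

lemma conj_mult_list: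
  assumes "set xs \<subseteq> Q" "z \<in> Q"
  shows "mult_list W xs \<otimes>\<^bsub>W\<^esub> z \<otimes>\<^bsub>W\<^esub> inv\<^bsub>W\<^esub> mult_list W xs \<in> Q \<and>
    mult_list H (map f xs) \<otimes>\<^bsub>H\<^esub> f z \<otimes>\<^bsub>H\<^esub> inv\<^bsub>H\<^esub> mult_list H (map f xs)
      = f (mult_list W xs \<otimes>\<^bsub>W\<^esub> z \<otimes>\<^bsub>W\<^esub> inv\<^bsub>W\<^esub> mult_list W xs)"
  using assms(1)
proof (induct xs)
  case Nil
  then show ?case using assms(2) Q_closed f_closed by auto
next
  case (Cons y xs)
  let ?P = "mult_list W xs" and ?Ph = "mult_list H (map f xs)"
  let ?w = "?P \<otimes>\<^bsub>W\<^esub> z \<otimes>\<^bsub>W\<^esub> inv\<^bsub>W\<^esub> ?P"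
  have y: "y \<in> Q" and xs: "set xs \<subseteq> Q" using Cons by auto
  then have IH: "?w \<in> Q" "?Ph \<otimes>\<^bsub>H\<^esub> f z \<otimes>\<^bsub>H\<^esub> inv\<^bsub>H\<^esub> ?Ph = f ?w"
    using Cons by auto
  have P: "?P \<in> carrier W" "?Ph \<in> carrier H"
    using xs Q_closed f_closed by (auto intro!: W.mult_list_closed H.mult_list_closed simp: subset_iff)
  have "mult_list W (y # xs) \<otimes>\<^bsub>W\<^esub> z \<otimes>\<^bsub>W\<^esub> inv\<^bsub>W\<^esub> mult_list W (y # xs) = y \<otimes>\<^bsub>W\<^esub> ?w \<otimes>\<^bsub>W\<^esub> y"
    using P y assms(2) Q_closed Q_inv[OF y] by (simp add: W.inv_mult_group W.m_assoc subset_iff)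
  moreover have "mult_list H (map f (y # xs)) \<otimes>\<^bsub>H\<^esub> f z \<otimes>\<^bsub>H\<^esub> inv\<^bsub>H\<^esub> mult_list H (map f (y # xs))
      = f y \<otimes>\<^bsub>H\<^esub> (?Ph \<otimes>\<^bsub>H\<^esub> f z \<otimes>\<^bsub>H\<^esub> inv\<^bsub>H\<^esub> ?Ph) \<otimes>\<^bsub>H\<^esub> f y"
    using P y assms(2) f_closed f_inv[OF y] by (simp add: H.inv_mult_group H.m_assoc)
  ultimately show ?case
    using IH y Q_reflect f_reflect by simp
qed

lemma mult_list_odd_alternating:
  assumes "x \<in> Q" "y \<in> Q"
  shows "mult_list W (alternating x y (Suc (2 * j))) \<in> Q \<and>
    mult_list H (map f (alternating x y (Suc (2 * j)))) = f (mult_list W (alternating x y (Suc (2 * j))))"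
proof -
  let ?xs = "alternating x y j" and ?c = "if even j then x else y"
  have xs: "set ?xs \<subseteq> Q" and c: "?c \<in> Q"
    using alternating_set[of x y j] assms by auto
  have W_carrier: "set (?xs @ [?c] @ rev ?xs) \<subseteq> carrier W"
    using xs c Q_closed by auto
  have H_carrier: "set (map f (?xs @ [?c] @ rev ?xs)) \<subseteq> carrier H"
    using xs c f_closed by auto
  have "inv\<^bsub>W\<^esub> mult_list W ?xs = mult_list W (rev ?xs)"
    by (rule W.inv_mult_list_involutions) (use xs Q_closed Q_involution in auto)
  then have "mult_list W (alternating x y (Suc (2 * j))) = mult_list W ?xs \<otimes>\<^bsub>W\<^esub> ?c \<otimes>\<^bsub>W\<^esub> inv\<^bsub>W\<^esub> mult_list W ?xs"
    unfolding alternating_odd using W_carrier by (simp add: W.mult_list_append W.m_assoc W.mult_list_closed)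
  moreover have "inv\<^bsub>H\<^esub> mult_list H (map f ?xs) = mult_list H (map f (rev ?xs))"
    unfolding rev_map[symmetric] by (rule H.inv_mult_list_involutions) (use xs f_closed f_involution in auto)
  then have "mult_list H (map f (alternating x y (Suc (2 * j))))
      = mult_list H (map f ?xs) \<otimes>\<^bsub>H\<^esub> f ?c \<otimes>\<^bsub>H\<^esub> inv\<^bsub>H\<^esub> mult_list H (map f ?xs)"
    unfolding alternating_odd using H_carrier by (simp add: H.mult_list_append H.m_assoc H.mult_list_closed del: rev_map)
  ultimately show ?thesis
    using conj_mult_list[OF xs c] by simp
qed

lemma f_commute:
  assumes x: "x \<in> Q" and y: "y \<in> Q" and comm: "x \<otimes>\<^bsub>W\<^esub> y = y \<otimes>\<^bsub>W\<^esub> x"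
  shows "f x \<otimes>\<^bsub>H\<^esub> f y = f y \<otimes>\<^bsub>H\<^esub> f x"
proof -
  have "y \<otimes>\<^bsub>W\<^esub> x \<otimes>\<^bsub>W\<^esub> y = x"
    using x y Q_closed Q_involution comm by (metis W.m_assoc W.r_one subsetD)
  then have "f y \<otimes>\<^bsub>H\<^esub> f x \<otimes>\<^bsub>H\<^esub> f y = f x"
    using f_reflect x y by simp
  then show ?thesis
    using x y f_closed f_involution by (metis H.m_assoc H.m_closed H.r_one)
qed

lemma braid_word_transfer:
  assumes x: "x \<in> Q" and y: "y \<in> Q"
    and braid_W: "mult_list W (alternating x y k) = mult_list W (alternating y x k)"
  shows "mult_list H (map f (alternating x y k)) = mult_list H (map f (alternating y x k))"
proof (cases "even k")
  case False
  then obtain j where "k = Suc (2 * j)"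
    by (metis oddE Suc_eq_plus1)
  then show ?thesis
    using mult_list_odd_alternating[OF x y, of j] mult_list_odd_alternating[OF y x, of j] braid_W
    by simp
next
  case True
  show ?thesis
  proof (cases k)
    case (Suc i)
    \<comment> \<open>the two braid words are \<open>w y\<close> and \<open>y w\<close> with w the odd braid word of length i\<close>
    with True obtain j where i: "i = Suc (2 * j)"
      by (metis evenE even_Suc Suc_eq_plus1 oddE)
    let ?w = "mult_list W (alternating x y i)"
    have w: "?w \<in> Q" "mult_list H (map f (alternating x y i)) = f ?w"
      using mult_list_odd_alternating[OF x y, of j] i by auto
    have alts: "alternating x y k = alternating x y i @ [y]" "alternating y x k = y # alternating x y i"
      using Suc i alternating_Suc_snoc[of x y i] by simp_all
    have "set (alternating x y i) \<subseteq> Q"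
      using alternating_set[of x y i] x y by auto
    then have carriers:
      "set (alternating x y i) \<subseteq> carrier W" "set (map f (alternating x y i)) \<subseteq> carrier H"
      using Q_closed f_closed by auto
    have "?w \<otimes>\<^bsub>W\<^esub> y = y \<otimes>\<^bsub>W\<^esub> ?w"
      using braid_W alts carriers y Q_closed w(1) by (auto simp: W.mult_list_append)
    then have "f ?w \<otimes>\<^bsub>H\<^esub> f y = f y \<otimes>\<^bsub>H\<^esub> f ?w"
      using f_commute w(1) y by blast
    then show ?thesis
      using alts carriers w f_closed y by (simp add: H.mult_list_append)
  qed simp
qed

lemma braid_transfer:
  assumes x: "x \<in> Q" and y: "y \<in> Q" and k: "(x \<otimes>\<^bsub>W\<^esub> y) [^]\<^bsub>W\<^esub> (k::nat) = \<one>\<^bsub>W\<^esub>"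
  shows "(f x \<otimes>\<^bsub>H\<^esub> f y) [^]\<^bsub>H\<^esub> k = \<one>\<^bsub>H\<^esub>"
proof -
  have "mult_list W (alternating x y k) = mult_list W (alternating y x k)"
    using W.braid_iff x y k Q_closed Q_involution by blast
  then have "mult_list H (map f (alternating x y k)) = mult_list H (map f (alternating y x k))"
    by (rule braid_word_transfer[OF x y])
  then show ?thesis
    using H.braid_iff[of "f x" "f y" k] x y f_closed f_involution by (simp add: map_alternating)
qed

end

section \<open>The rank of an abelian group\<close>

definition int_vec_group :: "('k \<Rightarrow> int) monoid" where
  "int_vec_group = \<lparr>carrier = UNIV, monoid.mult = (\<lambda>f g k. f k + g k), monoid.one = (\<lambda>k. 0)\<rparr>"

lemma int_vec_group_simps [simp]:
  "carrier int_vec_group = UNIV"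
  "x \<otimes>\<^bsub>int_vec_group\<^esub> y = (\<lambda>k. x k + y k)"
  "\<one>\<^bsub>int_vec_group\<^esub> = (\<lambda>k. 0)"
  by (auto simp: int_vec_group_def)

lemma int_vec_group_is_group: "group int_vec_group"
  by (rule groupI) (auto simp: fun_eq_iff intro: exI[of _ "\<lambda>k. - x k" for x])

lemma int_vec_group_inv [simp]: "inv\<^bsub>int_vec_group\<^esub> x = (\<lambda>k. - x k)"
  by (rule group.inv_equality[OF int_vec_group_is_group]) auto

lemma int_vec_group_int_pow [simp]: "x [^]\<^bsub>int_vec_group\<^esub> (n::int) = (\<lambda>k. n * x k)"
proof -
  have "x [^]\<^bsub>int_vec_group\<^esub> (n::nat) = (\<lambda>k. int n * x k)" for n
    by (induct n) (auto simp: algebra_simps)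
  then show ?thesis
    by (auto simp: int_pow_def2)
qed

lemma (in comm_group) hom_int_vec_finprod_pow:
  assumes h: "h \<in> hom G int_vec_group" and I: "finite I" "f \<in> I \<rightarrow> carrier G"
  shows "h (finprod G (\<lambda>i. f i [^] (n i :: int)) I) k = (\<Sum>i\<in>I. n i * h (f i) k)"
proof -
  interpret group_hom G int_vec_group h
    using h int_vec_group_is_group by (simp add: group_hom_def group_hom_axioms_def)
  show ?thesis
    using I
  proof (induct I rule: finite_induct)
    case (insert a I)
    have "h (finprod G (\<lambda>i. f i [^] n i) (insert a I)) = h (f a [^] n a \<otimes> finprod G (\<lambda>i. f i [^] n i) I)"
      using insert by (intro arg_cong[where f=h] finprod_insert) auto
    moreover have "finprod G (\<lambda>i. f i [^] n i) I \<in> carrier G"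
      using insert by (intro finprod_closed) auto
    ultimately show ?case
      using insert by (simp add: hom_int_pow)
  qed simp
qed

text \<open>Eliminating one coordinate at a time needs no division, so this holds over any
  integral domain.\<close>

lemma nontrivial_relation_biggerset:
  fixes v :: "'b \<Rightarrow> 'k \<Rightarrow> 'r::idom"
  assumes "finite K" "finite B" "card K < card B"
  shows "\<exists>n. (\<exists>b\<in>B. n b \<noteq> 0) \<and> (\<forall>k\<in>K. (\<Sum>b\<in>B. n b * v b k) = 0)"
  using assms
proof (induct K arbitrary: B v rule: finite_induct)
  case empty
  then obtain b0 where "b0 \<in> B" by fastforce
  then show ?case by (intro exI[of _ "\<lambda>b. if b = b0 then 1 else 0"]) auto
next
  case (insert k K B v)
  show ?case
  proof (cases "\<forall>b\<in>B. v b k = 0")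
    case True
    then show ?thesis
      using insert(3)[OF insert(4), of v] insert(1,2,5) by auto
  next
    case False
    then obtain b0 where b0: "b0 \<in> B" "v b0 k \<noteq> 0" by blast
    define B' where "B' = B - {b0}"
    define v' where "v' = (\<lambda>b j. v b0 k * v b j - v b k * v b0 j)"
    have "finite B'" "card K < card B'"
      using insert b0 unfolding B'_def by (auto simp: card_Diff_singleton)
    then obtain n' where n': "\<exists>b\<in>B'. n' b \<noteq> 0" "\<forall>j\<in>K. (\<Sum>b\<in>B'. n' b * v' b j) = 0"
      using insert(3) by blast
    define n where "n = (\<lambda>b. if b = b0 then - (\<Sum>b'\<in>B'. n' b' * v b' k) else v b0 k * n' b)"
    have combine: "(\<Sum>b\<in>B. n b * v b j) = (\<Sum>b\<in>B'. n' b * v' b j)" for j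
    proof -
      have "(\<Sum>b\<in>B. n b * v b j) = n b0 * v b0 j + (\<Sum>b\<in>B'. n b * v b j)"
        unfolding B'_def using sum.remove[OF insert(4) b0(1)] by simp
      also have "(\<Sum>b\<in>B'. n b * v b j) = (\<Sum>b\<in>B'. v b0 k * (n' b * v b j))"
        by (rule sum.cong) (auto simp: n_def B'_def)
      finally show ?thesis
        by (simp add: n_def v'_def algebra_simps sum_distrib_left sum_distrib_right sum_subtractf)
    qed
    obtain b1 where b1: "b1 \<in> B'" "n' b1 \<noteq> 0"
      using n'(1) by blast
    then have "b1 \<in> B" "n b1 \<noteq> 0"
      using b0 unfolding n_def B'_def by auto
    moreover have "\<forall>j\<in>insert k K. (\<Sum>b\<in>B. n b * v b j) = 0"
      using combine n'(2) by (simp add: v'_def mult.commute)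
    ultimately show ?thesis by blast
  qed
qed

lemma (in comm_group) Z_independent_diagonal:
  fixes h :: "'a \<Rightarrow> 'k \<Rightarrow> int" and b :: "'k \<Rightarrow> 'a"
  assumes K: "finite K" and h: "h \<in> hom G int_vec_group"
    and b: "\<And>k. k \<in> K \<Longrightarrow> b k \<in> carrier G"
    and diagonal: "\<And>k j. k \<in> K \<Longrightarrow> j \<in> K \<Longrightarrow> h (b k) j = 0 \<longleftrightarrow> j \<noteq> k"
  shows "Z_independent G (b ` K) \<and> card (b ` K) = card K"
proof
  have inj: "inj_on b K"
  proof (rule inj_onI)
    fix k1 k2
    assume k: "k1 \<in> K" "k2 \<in> K" "b k1 = b k2"
    have "h (b k1) k1 \<noteq> 0"
      using diagonal[OF k(1) k(1)] by simp
    then show "k1 = k2"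
      using diagonal[OF k(2) k(1)] k(3) by auto
  qed
  then show "card (b ` K) = card K"
    by (rule card_image)
  show "Z_independent G (b ` K)"
    unfolding Z_independent_def
  proof (intro conjI allI impI ballI)
    show "b ` K \<subseteq> carrier G" "finite (b ` K)"
      using b K by auto
  next
    fix n :: "'a \<Rightarrow> int" and x
    assume prod: "finprod G (\<lambda>x. x [^] n x) (b ` K) = \<one>" and "x \<in> b ` K"
    then obtain k0 where k0: "k0 \<in> K" "x = b k0" by blast
    have "0 = h (finprod G (\<lambda>x. x [^] n x) (b ` K)) k0"
      using prod group_hom.hom_one[of G int_vec_group h]
      by (simp add: group_hom_def group_hom_axioms_def h int_vec_group_is_group is_group)
    also have "\<dots> = (\<Sum>x\<in>b ` K. n x * h x k0)"
      using hom_int_vec_finprod_pow[OF h, of "b ` K" "\<lambda>x. x"] K b by auto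
    also have "\<dots> = (\<Sum>k\<in>K. n (b k) * h (b k) k0)"
      by (rule sum.reindex[OF inj, unfolded comp_def])
    also have "\<dots> = n (b k0) * h (b k0) k0"
    proof -
      have "(\<Sum>k\<in>K - {k0}. n (b k) * h (b k) k0) = 0"
        using diagonal[OF _ k0(1)] by (intro sum.neutral) auto
      then show ?thesis
        using sum.remove[OF K k0(1), of "\<lambda>k. n (b k) * h (b k) k0"] by simp
    qed
    finally show "n x = 0"
      using k0 diagonal[OF k0(1) k0(1)] by simp
  qed
qed

lemma (in comm_group) card_Z_independent_le:
  fixes h :: "'a \<Rightarrow> 'k \<Rightarrow> int"
  assumes K: "finite K" and h: "h \<in> hom G int_vec_group"
    and faithful: "\<And>g. g \<in> carrier G \<Longrightarrow> (\<forall>k\<in>K. h g k = 0) \<Longrightarrow> g = \<one>"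
    and "Z_independent G B"
  shows "card B \<le> card K"
proof (rule ccontr)
  have B: "B \<subseteq> carrier G" "finite B"
    and indep: "\<And>n :: 'a \<Rightarrow> int. finprod G (\<lambda>x. x [^] n x) B = \<one> \<Longrightarrow> \<forall>x\<in>B. n x = 0"
    using assms(4) unfolding Z_independent_def by auto
  assume "\<not> card B \<le> card K"
  then obtain n :: "'a \<Rightarrow> int" where n: "\<exists>x\<in>B. n x \<noteq> 0"
    "\<forall>k\<in>K. (\<Sum>x\<in>B. n x * h x k) = 0"
    using nontrivial_relation_biggerset[OF K B(2), of h] by force
  have "finprod G (\<lambda>x. x [^] n x) B = \<one>"
  proof (rule faithful)
    show "finprod G (\<lambda>x. x [^] n x) B \<in> carrier G"
      using B by (intro finprod_closed) auto
    show "\<forall>k\<in>K. h (finprod G (\<lambda>x. x [^] n x) B) k = 0"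
      using n(2) hom_int_vec_finprod_pow[OF h B(2), of "\<lambda>x. x" n] B(1) by (simp add: subset_iff)
  qed
  then show False
    using indep n(1) by blast
qed

lemma (in comm_group) has_rank_coordinates:
  fixes h :: "'a \<Rightarrow> 'k \<Rightarrow> int" and b :: "'k \<Rightarrow> 'a"
  assumes "finite K" "h \<in> hom G int_vec_group"
    and "\<And>g. g \<in> carrier G \<Longrightarrow> (\<forall>k\<in>K. h g k = 0) \<Longrightarrow> g = \<one>"
    and "\<And>k. k \<in> K \<Longrightarrow> b k \<in> carrier G"
    and "\<And>k j. k \<in> K \<Longrightarrow> j \<in> K \<Longrightarrow> h (b k) j = 0 \<longleftrightarrow> j \<noteq> k"
  shows "has_rank G (card K)"
  unfolding has_rank_def
  using Z_independent_diagonal[OF assms(1,2,4,5)] card_Z_independent_le[OF assms(1-3)] by blast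

section \<open>Coxeter groups and their adjoint groups\<close>

locale coxeter =
  fixes S :: "'g set" and m :: "'g \<Rightarrow> 'g \<Rightarrow> enat"
  assumes coxeter: "coxeter_system S m"
begin

abbreviation "W \<equiv> coxeter_group S m"
abbreviation "Q \<equiv> coxeter_quandle S m"
abbreviation "Ad \<equiv> adjoint_group S m"
abbreviation "gen \<equiv> pres_gen S (cox_rels S m)"
abbreviation "e \<equiv> pres_gen Q (ad_rels S m)"
abbreviation "\<phi> \<equiv> ad_phi S m"

sublocale W: group W
  unfolding coxeter_group_def by (rule presented_group_is_group)

sublocale Ad: group Ad
  unfolding adjoint_group_def by (rule presented_group_is_group)

lemma gen_closed: "s \<in> S \<Longrightarrow> gen s \<in> carrier W"
  unfolding coxeter_group_def by (rule pres_gen_in)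

lemma gen_braid:
  assumes "s \<in> S" "t \<in> S" "m s t = enat k"
  shows "(gen s \<otimes>\<^bsub>W\<^esub> gen t) [^]\<^bsub>W\<^esub> k = \<one>\<^bsub>W\<^esub>"
proof -
  let ?r = "concat (replicate k [(s, True), (t, True)])"
  have "?r \<in> cox_rels S m" "?r \<in> pres_words S"
    using assms unfolding cox_rels_def by (auto simp: pres_words_def)
  then show ?thesis
    using pres_relator[of ?r "cox_rels S m" S] W.word_eval_replicate_pair[of gen s t k] gen_closed assms
    by (simp add: coxeter_group_def)
qed

lemma gen_involution: "s \<in> S \<Longrightarrow> gen s \<otimes>\<^bsub>W\<^esub> gen s = \<one>\<^bsub>W\<^esub>"
  using gen_braid[of s s 1] coxeter gen_closed unfolding coxeter_system_def
  by (simp add: one_enat_def)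

lemma Q_iff:
  "x \<in> Q \<longleftrightarrow> (\<exists>w s. w \<in> carrier W \<and> s \<in> S \<and> x = inv\<^bsub>W\<^esub> w \<otimes>\<^bsub>W\<^esub> gen s \<otimes>\<^bsub>W\<^esub> w)"
  unfolding coxeter_quandle_def by blast

lemma Q_closed: "x \<in> Q \<Longrightarrow> x \<in> carrier W"
  unfolding Q_iff using gen_closed by auto

lemma gen_in_Q: "s \<in> S \<Longrightarrow> gen s \<in> Q"
  unfolding Q_iff using gen_closed by (intro exI[of _ "\<one>\<^bsub>W\<^esub>"]) auto

lemma Q_involution: "x \<in> Q \<Longrightarrow> x \<otimes>\<^bsub>W\<^esub> x = \<one>\<^bsub>W\<^esub>"
proof -
  assume "x \<in> Q"
  then obtain w s where ws: "w \<in> carrier W" "s \<in> S" "x = inv\<^bsub>W\<^esub> w \<otimes>\<^bsub>W\<^esub> gen s \<otimes>\<^bsub>W\<^esub> w"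
    unfolding Q_iff by blast
  then have "x \<otimes>\<^bsub>W\<^esub> x = inv\<^bsub>W\<^esub> w \<otimes>\<^bsub>W\<^esub> (gen s \<otimes>\<^bsub>W\<^esub> gen s) \<otimes>\<^bsub>W\<^esub> w"
    using gen_closed by (simp add: W.m_assoc)
  then show ?thesis
    using ws gen_involution gen_closed by simp
qed

lemma Q_inv: "x \<in> Q \<Longrightarrow> inv\<^bsub>W\<^esub> x = x"
  using Q_involution Q_closed W.inv_equality by blast

lemma Q_conj: "x \<in> Q \<Longrightarrow> g \<in> carrier W \<Longrightarrow> inv\<^bsub>W\<^esub> g \<otimes>\<^bsub>W\<^esub> x \<otimes>\<^bsub>W\<^esub> g \<in> Q"
proof -
  assume x: "x \<in> Q" and g: "g \<in> carrier W"
  then obtain w s where ws: "w \<in> carrier W" "s \<in> S" "x = inv\<^bsub>W\<^esub> w \<otimes>\<^bsub>W\<^esub> gen s \<otimes>\<^bsub>W\<^esub> w"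
    unfolding Q_iff by blast
  then have "inv\<^bsub>W\<^esub> g \<otimes>\<^bsub>W\<^esub> x \<otimes>\<^bsub>W\<^esub> g
      = inv\<^bsub>W\<^esub> (w \<otimes>\<^bsub>W\<^esub> g) \<otimes>\<^bsub>W\<^esub> gen s \<otimes>\<^bsub>W\<^esub> (w \<otimes>\<^bsub>W\<^esub> g)"
    using g gen_closed by (simp add: W.m_assoc W.inv_mult_group)
  then show ?thesis
    unfolding Q_iff using ws g by blast
qed

lemma Q_reflect: "x \<in> Q \<Longrightarrow> y \<in> Q \<Longrightarrow> y \<otimes>\<^bsub>W\<^esub> x \<otimes>\<^bsub>W\<^esub> y \<in> Q"
  using Q_conj[of x y] Q_inv[of y] Q_closed by simp

lemma e_closed: "x \<in> Q \<Longrightarrow> e x \<in> carrier Ad"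
  unfolding adjoint_group_def by (rule pres_gen_in)

lemma e_image_closed: "e ` Q \<subseteq> carrier Ad"
  using e_closed by blast

lemma Ad_relation:
  assumes x: "x \<in> Q" and y: "y \<in> Q"
  shows "inv\<^bsub>Ad\<^esub> e y \<otimes>\<^bsub>Ad\<^esub> e x \<otimes>\<^bsub>Ad\<^esub> e y = e (y \<otimes>\<^bsub>W\<^esub> x \<otimes>\<^bsub>W\<^esub> y)"
proof -
  let ?z = "y \<otimes>\<^bsub>W\<^esub> x \<otimes>\<^bsub>W\<^esub> y"
  let ?r = "[(y, False), (x, True), (y, True), (?z, False)]"
  have z: "?z \<in> Q"
    using Q_reflect x y by blast
  have "?r \<in> ad_rels S m" "?r \<in> pres_words Q"
    unfolding ad_rels_def quandle_op_def using x y z by auto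
  then have "inv\<^bsub>Ad\<^esub> e y \<otimes>\<^bsub>Ad\<^esub> (e x \<otimes>\<^bsub>Ad\<^esub> (e y \<otimes>\<^bsub>Ad\<^esub> inv\<^bsub>Ad\<^esub> e ?z)) = \<one>\<^bsub>Ad\<^esub>"
    using pres_relator[of ?r "ad_rels S m" Q, folded adjoint_group_def] e_closed x y z
    by (simp add: word_eval_Cons)
  then have "inv\<^bsub>Ad\<^esub> e y \<otimes>\<^bsub>Ad\<^esub> e x \<otimes>\<^bsub>Ad\<^esub> e y \<otimes>\<^bsub>Ad\<^esub> inv\<^bsub>Ad\<^esub> e ?z = \<one>\<^bsub>Ad\<^esub>"
    using e_closed x y z by (simp add: Ad.m_assoc)
  then have "inv\<^bsub>Ad\<^esub> (inv\<^bsub>Ad\<^esub> e ?z) = inv\<^bsub>Ad\<^esub> e y \<otimes>\<^bsub>Ad\<^esub> e x \<otimes>\<^bsub>Ad\<^esub> e y"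
    by (rule Ad.inv_equality) (use e_closed x y z in auto)
  then show ?thesis
    using e_closed z by simp
qed

lemma Ad_relation':
  assumes x: "x \<in> Q" and y: "y \<in> Q"
  shows "e y \<otimes>\<^bsub>Ad\<^esub> e x \<otimes>\<^bsub>Ad\<^esub> inv\<^bsub>Ad\<^esub> e y = e (y \<otimes>\<^bsub>W\<^esub> x \<otimes>\<^bsub>W\<^esub> y)"
proof -
  let ?z = "y \<otimes>\<^bsub>W\<^esub> x \<otimes>\<^bsub>W\<^esub> y"
  have z: "?z \<in> Q"
    using Q_reflect x y by blast
  have "y \<otimes>\<^bsub>W\<^esub> ?z \<otimes>\<^bsub>W\<^esub> y = (y \<otimes>\<^bsub>W\<^esub> y) \<otimes>\<^bsub>W\<^esub> x \<otimes>\<^bsub>W\<^esub> (y \<otimes>\<^bsub>W\<^esub> y)"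
    using x y Q_closed by (simp add: W.m_assoc)
  then have "e x = inv\<^bsub>Ad\<^esub> e y \<otimes>\<^bsub>Ad\<^esub> e ?z \<otimes>\<^bsub>Ad\<^esub> e y"
    using Ad_relation[OF z y] x y Q_closed Q_involution by simp
  then have "e y \<otimes>\<^bsub>Ad\<^esub> e x \<otimes>\<^bsub>Ad\<^esub> inv\<^bsub>Ad\<^esub> e y
      = e y \<otimes>\<^bsub>Ad\<^esub> (inv\<^bsub>Ad\<^esub> e y \<otimes>\<^bsub>Ad\<^esub> e ?z \<otimes>\<^bsub>Ad\<^esub> e y) \<otimes>\<^bsub>Ad\<^esub> inv\<^bsub>Ad\<^esub> e y"
    by simp
  also have "\<dots> = e ?z"
    using e_closed y z by (simp add: Ad.m_assoc)
  finally show ?thesis .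
qed

lemma phi_eq_pres_lift: "\<phi> = pres_lift W id"
  by (rule ext) (simp add: ad_phi_def pres_lift_def)

lemma phi_relator:
  assumes "r \<in> ad_rels S m" "r \<in> pres_words Q"
  shows "word_eval W id r = \<one>\<^bsub>W\<^esub>"
proof -
  obtain x y where xy: "x \<in> Q" "y \<in> Q"
    "r = [(y, False), (x, True), (y, True), (quandle_op W x y, False)]"
    using assms(1) unfolding ad_rels_def by blast
  have "word_eval W id r = y \<otimes>\<^bsub>W\<^esub> (x \<otimes>\<^bsub>W\<^esub> (y \<otimes>\<^bsub>W\<^esub> (y \<otimes>\<^bsub>W\<^esub> x \<otimes>\<^bsub>W\<^esub> y)))"
    using xy Q_reflect Q_closed by (simp add: word_eval_Cons quandle_op_def Q_inv)
  also have "\<dots> = \<one>\<^bsub>W\<^esub>"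
    using xy Q_closed Q_involution by (simp add: W.m_assoc[symmetric])
  finally show ?thesis .
qed

lemma phi_hom: "\<phi> \<in> hom Ad W"
  unfolding phi_eq_pres_lift adjoint_group_def
  by (rule W.pres_lift_hom) (auto simp: Q_closed phi_relator)

lemma phi_e: "x \<in> Q \<Longrightarrow> \<phi> (e x) = x"
  unfolding phi_eq_pres_lift
  by (rule W.pres_lift_gen[of id Q "ad_rels S m", simplified]) (auto simp: Q_closed phi_relator)

sublocale phi: group_hom Ad W \<phi>
  by (simp add: group_hom_def group_hom_axioms_def phi_hom W.is_group Ad.is_group)

lemma Ad_conj_word:
  assumes "u \<in> pres_words Q" "x \<in> Q"
  shows "inv\<^bsub>Ad\<^esub> (word_eval Ad e u) \<otimes>\<^bsub>Ad\<^esub> e x \<otimes>\<^bsub>Ad\<^esub> word_eval Ad e u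
    = e (inv\<^bsub>W\<^esub> (\<phi> (word_eval Ad e u)) \<otimes>\<^bsub>W\<^esub> x \<otimes>\<^bsub>W\<^esub> \<phi> (word_eval Ad e u))"
  using assms
proof (induct u arbitrary: x)
  case Nil
  then show ?case using e_closed Q_closed by simp
next
  case (Cons p u x)
  obtain y b where p: "p = (y, b)" by force
  have y: "y \<in> Q" and u: "u \<in> pres_words Q"
    using Cons p by auto
  let ?g = "word_eval Ad e u"
  let ?l = "if b then e y else inv\<^bsub>Ad\<^esub> (e y)"
  have g: "?g \<in> carrier Ad"
    using Ad.word_eval_closed[OF e_image_closed u] .
  have l: "?l \<in> carrier Ad" "\<phi> ?l = y"
    using e_closed phi_e y Q_inv by auto
  have conj_l: "inv\<^bsub>Ad\<^esub> ?l \<otimes>\<^bsub>Ad\<^esub> e x \<otimes>\<^bsub>Ad\<^esub> ?l = e (y \<otimes>\<^bsub>W\<^esub> x \<otimes>\<^bsub>W\<^esub> y)"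
    using Ad_relation[OF Cons(3) y] Ad_relation'[OF Cons(3) y] e_closed y by auto
  have "inv\<^bsub>Ad\<^esub> (?l \<otimes>\<^bsub>Ad\<^esub> ?g) \<otimes>\<^bsub>Ad\<^esub> e x \<otimes>\<^bsub>Ad\<^esub> (?l \<otimes>\<^bsub>Ad\<^esub> ?g)
      = inv\<^bsub>Ad\<^esub> ?g \<otimes>\<^bsub>Ad\<^esub> (inv\<^bsub>Ad\<^esub> ?l \<otimes>\<^bsub>Ad\<^esub> e x \<otimes>\<^bsub>Ad\<^esub> ?l) \<otimes>\<^bsub>Ad\<^esub> ?g"
    using g l e_closed Cons(3) by (simp add: Ad.inv_mult_group Ad.m_assoc)
  also have "\<dots> = e (inv\<^bsub>W\<^esub> (\<phi> ?g) \<otimes>\<^bsub>W\<^esub> (y \<otimes>\<^bsub>W\<^esub> x \<otimes>\<^bsub>W\<^esub> y) \<otimes>\<^bsub>W\<^esub> \<phi> ?g)"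
    using conj_l Cons(1)[OF u Q_reflect[OF Cons(3) y]] by simp
  also have "inv\<^bsub>W\<^esub> (\<phi> ?g) \<otimes>\<^bsub>W\<^esub> (y \<otimes>\<^bsub>W\<^esub> x \<otimes>\<^bsub>W\<^esub> y) \<otimes>\<^bsub>W\<^esub> \<phi> ?g
      = inv\<^bsub>W\<^esub> (\<phi> (?l \<otimes>\<^bsub>Ad\<^esub> ?g)) \<otimes>\<^bsub>W\<^esub> x \<otimes>\<^bsub>W\<^esub> \<phi> (?l \<otimes>\<^bsub>Ad\<^esub> ?g)"
    using g l y Cons(3) Q_closed Q_inv[OF y] by (simp add: W.inv_mult_group W.m_assoc)
  moreover have "word_eval Ad e (p # u) = ?l \<otimes>\<^bsub>Ad\<^esub> ?g"
    using p by (simp add: word_eval_Cons)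
  ultimately show ?case
    by simp
qed

lemma Ad_conj:
  assumes "g \<in> carrier Ad" "x \<in> Q"
  shows "inv\<^bsub>Ad\<^esub> g \<otimes>\<^bsub>Ad\<^esub> e x \<otimes>\<^bsub>Ad\<^esub> g = e (inv\<^bsub>W\<^esub> (\<phi> g) \<otimes>\<^bsub>W\<^esub> x \<otimes>\<^bsub>W\<^esub> \<phi> g)"
proof -
  obtain u where "u \<in> pres_words Q" "g = word_eval Ad e u"
    using assms(1) unfolding adjoint_group_def by (rule pres_carrierE)
  then show ?thesis
    using Ad_conj_word assms(2) by simp
qed

lemma Ad_hom_unique:
  assumes "group H" "h1 \<in> hom Ad H" "h2 \<in> hom Ad H"
    "\<And>x. x \<in> Q \<Longrightarrow> h1 (e x) = h2 (e x)" "g \<in> carrier Ad"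
  shows "h1 g = h2 g"
  using pres_hom_unique[of H h1 Q "ad_rels S m" h2 g] assms unfolding adjoint_group_def by blast

lemma C_W_iff: "c \<in> C_W S m \<longleftrightarrow> c \<in> carrier Ad \<and> \<phi> c = \<one>\<^bsub>W\<^esub>"
  unfolding C_W_def kernel_def by simp

lemma C_W_subgroup: "subgroup (C_W S m) Ad"
  unfolding C_W_def by (rule phi.subgroup_kernel)

text \<open>By \<open>Ad_conj\<close>, conjugation by \<open>c \<in> C_W\<close> fixes every generator \<open>e x\<close>.\<close>

lemma C_W_central:
  assumes c: "c \<in> C_W S m" and g: "g \<in> carrier Ad"
  shows "c \<otimes>\<^bsub>Ad\<^esub> g = g \<otimes>\<^bsub>Ad\<^esub> c"
proof -
  have c': "c \<in> carrier Ad" "\<phi> c = \<one>\<^bsub>W\<^esub>"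
    using c C_W_iff by auto
  have "(\<lambda>g. inv\<^bsub>Ad\<^esub> c \<otimes>\<^bsub>Ad\<^esub> g \<otimes>\<^bsub>Ad\<^esub> c) \<in> hom Ad Ad"
    using c' by (intro homI) (auto simp: Ad.m_assoc)
  moreover have "(\<lambda>g. g) \<in> hom Ad Ad"
    by (intro homI) auto
  ultimately have "(\<lambda>g. inv\<^bsub>Ad\<^esub> c \<otimes>\<^bsub>Ad\<^esub> g \<otimes>\<^bsub>Ad\<^esub> c) g = (\<lambda>g. g) g"
  proof (rule Ad_hom_unique[OF Ad.is_group _ _ _ g])
    fix x
    assume "x \<in> Q"
    then show "(\<lambda>g. inv\<^bsub>Ad\<^esub> c \<otimes>\<^bsub>Ad\<^esub> g \<otimes>\<^bsub>Ad\<^esub> c) (e x) = (\<lambda>g. g) (e x)"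
      using Ad_conj[OF c'(1)] c' Q_closed by simp
  qed
  then have "c \<otimes>\<^bsub>Ad\<^esub> g = c \<otimes>\<^bsub>Ad\<^esub> (inv\<^bsub>Ad\<^esub> c \<otimes>\<^bsub>Ad\<^esub> g \<otimes>\<^bsub>Ad\<^esub> c)"
    by simp
  also have "\<dots> = g \<otimes>\<^bsub>Ad\<^esub> c"
    using c' g by (simp add: Ad.m_assoc)
  finally show ?thesis .
qed

abbreviation "C \<equiv> Ad\<lparr>carrier := C_W S m\<rparr>"

sublocale C: comm_group C
proof -
  interpret C: group C
    using Ad.subgroup_imp_group[OF C_W_subgroup] .
  show "comm_group C"
    by (rule C.group_comm_groupI) (simp add: C_W_central C_W_iff)
qed

lemma phi_lift_word:
  assumes "u \<in> pres_words S"
  shows "word_eval Ad (e \<circ> gen) u \<in> carrier Ad"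
    and "\<phi> (word_eval Ad (e \<circ> gen) u) = word_eval W gen u"
proof -
  have gen_e: "(e \<circ> gen) ` S \<subseteq> carrier Ad"
    using e_closed gen_in_Q by auto
  show "word_eval Ad (e \<circ> gen) u \<in> carrier Ad"
    using Ad.word_eval_closed[OF gen_e assms] .
  have "\<phi> (word_eval Ad (e \<circ> gen) u) = word_eval W (\<phi> \<circ> (e \<circ> gen)) u"
    using hom_word_eval[OF Ad.is_group W.is_group phi_hom gen_e assms] .
  also have "\<dots> = word_eval W gen u"
    by (rule word_eval_cong[OF _ assms]) (simp add: phi_e gen_in_Q)
  finally show "\<phi> (word_eval Ad (e \<circ> gen) u) = word_eval W gen u" .
qed

lemma W_carrierE:
  assumes "w \<in> carrier W"
  obtains u where "u \<in> pres_words S" "w = word_eval W gen u"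
  using assms unfolding coxeter_group_def by (rule pres_carrierE)

lemma e_square_C_W: "x \<in> Q \<Longrightarrow> e x \<otimes>\<^bsub>Ad\<^esub> e x \<in> C_W S m"
  using e_closed Q_involution phi_e by (simp add: C_W_iff)

lemma e_square_conj_class:
  assumes x: "x \<in> Q" and y: "y \<in> Q" and same_class: "conj_class W x = conj_class W y"
  shows "e x \<otimes>\<^bsub>Ad\<^esub> e x = e y \<otimes>\<^bsub>Ad\<^esub> e y"
proof -
  have "x \<in> conj_class W y"
    using W.conj_class_self Q_closed x same_class by blast
  then obtain w where w: "w \<in> carrier W" "x = inv\<^bsub>W\<^esub> w \<otimes>\<^bsub>W\<^esub> y \<otimes>\<^bsub>W\<^esub> w"
    unfolding conj_class_def by blast
  obtain u where u: "u \<in> pres_words S" "w = word_eval W gen u"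
    using W_carrierE[OF w(1)] .
  let ?g = "word_eval Ad (e \<circ> gen) u"
  have g: "?g \<in> carrier Ad" "\<phi> ?g = w"
    using phi_lift_word[OF u(1)] u(2) by auto
  have "e x = inv\<^bsub>Ad\<^esub> ?g \<otimes>\<^bsub>Ad\<^esub> e y \<otimes>\<^bsub>Ad\<^esub> ?g"
    using Ad_conj[OF g(1) y] g w by simp
  then have "e x \<otimes>\<^bsub>Ad\<^esub> e x = inv\<^bsub>Ad\<^esub> ?g \<otimes>\<^bsub>Ad\<^esub> (e y \<otimes>\<^bsub>Ad\<^esub> e y) \<otimes>\<^bsub>Ad\<^esub> ?g"
    using g e_closed y by (simp add: Ad.m_assoc)
  also have "\<dots> = inv\<^bsub>Ad\<^esub> ?g \<otimes>\<^bsub>Ad\<^esub> (?g \<otimes>\<^bsub>Ad\<^esub> (e y \<otimes>\<^bsub>Ad\<^esub> e y))"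
    using C_W_central[OF e_square_C_W[OF y] g(1)] g e_closed y by (simp add: Ad.m_assoc)
  also have "\<dots> = e y \<otimes>\<^bsub>Ad\<^esub> e y"
    using g e_closed y by simp
  finally show ?thesis .
qed

definition reflection_classes :: "('g \<times> bool) list set set set" where
  "reflection_classes = conj_class W ` Q"

lemma conj_class_in_reflection_classes [simp]: "x \<in> Q \<Longrightarrow> conj_class W x \<in> reflection_classes"
  unfolding reflection_classes_def by blast

definition class_count :: "_ \<Rightarrow> ('g \<times> bool) list set set \<Rightarrow> int" where
  "class_count = pres_lift int_vec_group (\<lambda>x k. if k = conj_class W x then 1 else 0)"

lemma class_count_relator:
  assumes "r \<in> ad_rels S m" "r \<in> pres_words Q"
  shows "word_eval int_vec_group (\<lambda>x k. if k = conj_class W x then 1 else 0) r = \<one>\<^bsub>int_vec_group\<^esub>"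
proof -
  obtain x y where xy: "x \<in> Q" "y \<in> Q"
    "r = [(y, False), (x, True), (y, True), (quandle_op W x y, False)]"
    using assms(1) unfolding ad_rels_def by blast
  have "conj_class W (y \<otimes>\<^bsub>W\<^esub> x \<otimes>\<^bsub>W\<^esub> y) = conj_class W x"
    using W.conj_class_conj[of x y] Q_closed Q_inv[of y] xy by simp
  then show ?thesis
    using xy by (simp add: word_eval_Cons quandle_op_def)
qed

lemma class_count_hom: "class_count \<in> hom Ad int_vec_group"
  unfolding class_count_def adjoint_group_def
  by (rule group.pres_lift_hom[OF int_vec_group_is_group]) (auto simp: class_count_relator)

lemma class_count_e: "x \<in> Q \<Longrightarrow> class_count (e x) = (\<lambda>k. if k = conj_class W x then 1 else 0)"
  unfolding class_count_def
  by (rule group.pres_lift_gen[OF int_vec_group_is_group]) (auto simp: class_count_relator)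

sublocale class_count: group_hom Ad int_vec_group class_count
  by (simp add: group_hom_def group_hom_axioms_def class_count_hom int_vec_group_is_group Ad.is_group)

lemma finite_reflection_classes: "finite reflection_classes"
proof -
  have "reflection_classes \<subseteq> (\<lambda>s. conj_class W (gen s)) ` S"
  proof
    fix k
    assume "k \<in> reflection_classes"
    then obtain x where x: "x \<in> Q" "k = conj_class W x"
      unfolding reflection_classes_def by blast
    then obtain w s where ws: "w \<in> carrier W" "s \<in> S" "x = inv\<^bsub>W\<^esub> w \<otimes>\<^bsub>W\<^esub> gen s \<otimes>\<^bsub>W\<^esub> w"
      unfolding Q_iff by blast
    then show "k \<in> (\<lambda>s. conj_class W (gen s)) ` S"
      using x W.conj_class_conj[of "gen s" w] gen_closed by simp
  qed
  moreover have "finite S"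
    using coxeter unfolding coxeter_system_def by simp
  ultimately show ?thesis
    by (rule finite_subset[OF _ finite_imageI])
qed

definition class_rep :: "('g \<times> bool) list set set \<Rightarrow> ('g \<times> bool) list set" where
  "class_rep k = (SOME x. x \<in> Q \<and> conj_class W x = k)"

lemma class_rep: "k \<in> reflection_classes \<Longrightarrow> class_rep k \<in> Q \<and> conj_class W (class_rep k) = k"
  unfolding class_rep_def reflection_classes_def by (rule someI_ex) blast

definition class_square :: "('g \<times> bool) list set set \<Rightarrow> _" where
  "class_square k = e (class_rep k) \<otimes>\<^bsub>Ad\<^esub> e (class_rep k)"

lemma e_square_eq_class_square:
  assumes x: "x \<in> Q"
  shows "e x \<otimes>\<^bsub>Ad\<^esub> e x = class_square (conj_class W x)"
proof -
  have "class_rep (conj_class W x) \<in> Q" "conj_class W x = conj_class W (class_rep (conj_class W x))"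
    using class_rep[of "conj_class W x"] x by simp_all
  then show ?thesis
    unfolding class_square_def by (rule e_square_conj_class[OF x])
qed

lemma class_square_C_W: "k \<in> reflection_classes \<Longrightarrow> class_square k \<in> C_W S m"
  using class_rep e_square_C_W unfolding class_square_def by blast

lemma class_count_class_square:
  "k \<in> reflection_classes \<Longrightarrow> class_count (class_square k) = (\<lambda>j. if j = k then 2 else 0)"
  using class_rep[of k] e_closed class_count_e unfolding class_square_def by (auto simp: fun_eq_iff)

lemma class_count_hom_C: "class_count \<in> hom C int_vec_group"
  using class_count_hom C_W_iff by (auto simp: hom_def)

text \<open>The subgroup generated by the squares \<open>e x \<otimes> e x\<close>: they are central and depend
  only on the class of x, so it consists of the products of powers of the \<open>class_square k\<close>.\<close>

definition square_prod :: "(('g \<times> bool) list set set \<Rightarrow> int) \<Rightarrow> _" where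
  "square_prod a = finprod C (\<lambda>k. class_square k [^]\<^bsub>C\<^esub> a k) reflection_classes"

lemma class_square_pow_C_W: "k \<in> reflection_classes \<Longrightarrow> class_square k [^]\<^bsub>C\<^esub> (n::int) \<in> C_W S m"
  using C.int_pow_closed class_square_C_W by simp

lemma square_prod_C_W: "square_prod a \<in> C_W S m"
  unfolding square_prod_def using class_square_pow_C_W by (intro C.finprod_closed[simplified]) auto

lemma square_prod_mult: "square_prod a \<otimes>\<^bsub>Ad\<^esub> square_prod b = square_prod (\<lambda>k. a k + b k)"
proof -
  have "square_prod (\<lambda>k. a k + b k)
      = finprod C (\<lambda>k. class_square k [^]\<^bsub>C\<^esub> a k \<otimes>\<^bsub>C\<^esub> class_square k [^]\<^bsub>C\<^esub> b k) reflection_classes"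
    unfolding square_prod_def
    by (rule C.finprod_cong') (use class_square_C_W class_square_pow_C_W C.int_pow_mult C.m_closed in auto)
  also have "\<dots> = square_prod a \<otimes>\<^bsub>C\<^esub> square_prod b"
    unfolding square_prod_def by (rule C.finprod_multf) (use class_square_pow_C_W in auto)
  finally show ?thesis by simp
qed

lemma square_prod_eq_one: "(\<And>k. k \<in> reflection_classes \<Longrightarrow> a k = 0) \<Longrightarrow> square_prod a = \<one>\<^bsub>Ad\<^esub>"
  unfolding square_prod_def using C.finprod_one_eqI[of reflection_classes "\<lambda>k. class_square k [^]\<^bsub>C\<^esub> a k"]
  by simp

lemma class_count_square_prod: "k \<in> reflection_classes \<Longrightarrow> class_count (square_prod a) k = 2 * a k"
proof -
  assume k: "k \<in> reflection_classes"
  have "class_count (square_prod a) k = (\<Sum>j\<in>reflection_classes. a j * class_count (class_square j) k)"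
    unfolding square_prod_def
    by (rule C.hom_int_vec_finprod_pow[OF class_count_hom_C finite_reflection_classes])
       (use class_square_C_W in auto)
  also have "\<dots> = (\<Sum>j\<in>reflection_classes. if j = k then 2 * a k else 0)"
    by (rule sum.cong) (auto simp: class_count_class_square)
  finally show ?thesis
    using k finite_reflection_classes by simp
qed

definition Sq :: "(('g \<times> bool) list set \<times> bool) list set set" where
  "Sq = range square_prod"

lemma Sq_subset_C_W: "Sq \<subseteq> C_W S m"
  unfolding Sq_def using square_prod_C_W by auto

lemma Sq_subgroup: "subgroup Sq Ad"
proof (rule Ad.subgroupI)
  show "Sq \<subseteq> carrier Ad" "Sq \<noteq> {}"
    using Sq_subset_C_W C_W_iff unfolding Sq_def by auto
next
  fix x
  assume "x \<in> Sq"
  then obtain a where a: "x = square_prod a"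
    unfolding Sq_def by blast
  have "square_prod (\<lambda>k. - a k) \<otimes>\<^bsub>Ad\<^esub> x = \<one>\<^bsub>Ad\<^esub>"
    using a square_prod_mult square_prod_eq_one by simp
  then have "inv\<^bsub>Ad\<^esub> x = square_prod (\<lambda>k. - a k)"
    using a square_prod_C_W C_W_iff Ad.inv_equality by blast
  then show "inv\<^bsub>Ad\<^esub> x \<in> Sq"
    unfolding Sq_def by simp
next
  fix x y
  assume "x \<in> Sq" "y \<in> Sq"
  then show "x \<otimes>\<^bsub>Ad\<^esub> y \<in> Sq"
    unfolding Sq_def using square_prod_mult by auto
qed

lemma Sq_normal: "Sq \<lhd> Ad"
proof -
  have "g \<otimes>\<^bsub>Ad\<^esub> h \<otimes>\<^bsub>Ad\<^esub> inv\<^bsub>Ad\<^esub> g \<in> Sq" if g: "g \<in> carrier Ad" and h: "h \<in> Sq" for g h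
  proof -
    have h': "h \<in> C_W S m" "h \<in> carrier Ad"
      using h Sq_subset_C_W C_W_iff by auto
    have "g \<otimes>\<^bsub>Ad\<^esub> h \<otimes>\<^bsub>Ad\<^esub> inv\<^bsub>Ad\<^esub> g = h \<otimes>\<^bsub>Ad\<^esub> g \<otimes>\<^bsub>Ad\<^esub> inv\<^bsub>Ad\<^esub> g"
      using C_W_central[OF h'(1) g] by simp
    then have "g \<otimes>\<^bsub>Ad\<^esub> h \<otimes>\<^bsub>Ad\<^esub> inv\<^bsub>Ad\<^esub> g = h"
      using h' g by (simp add: Ad.m_assoc)
    then show ?thesis
      using h by simp
  qed
  then show ?thesis
    using Ad.normal_inv_iff Sq_subgroup by blast
qed

lemma e_square_in_Sq: "x \<in> Q \<Longrightarrow> e x \<otimes>\<^bsub>Ad\<^esub> e x \<in> Sq"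
proof -
  assume "x \<in> Q"
  then have k: "conj_class W x \<in> reflection_classes" by simp
  have "(\<lambda>j. class_square j [^]\<^bsub>C\<^esub> (if j = conj_class W x then 1 else 0 :: int))
      = (\<lambda>j. if conj_class W x = j then class_square j else \<one>\<^bsub>C\<^esub>)"
    using class_square_C_W[OF k] by (auto simp: fun_eq_iff)
  then have "square_prod (\<lambda>j. if j = conj_class W x then 1 else 0)
      = finprod C (\<lambda>j. if conj_class W x = j then class_square j else \<one>\<^bsub>C\<^esub>) reflection_classes"
    unfolding square_prod_def by simp
  also have "\<dots> = class_square (conj_class W x)"
    by (rule C.finprod_singleton[OF k finite_reflection_classes]) (use class_square_C_W in auto)
  finally show ?thesis
    unfolding Sq_def using e_square_eq_class_square[OF \<open>x \<in> Q\<close>] by (metis rangeI)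
qed

abbreviation "Ad_Sq \<equiv> Ad Mod Sq"
abbreviation "q g \<equiv> Sq #>\<^bsub>Ad\<^esub> g"

sublocale Sq: normal Sq Ad
  by (rule Sq_normal)

sublocale Ad_Sq: group Ad_Sq
  by (rule Sq.factorgroup_is_group)

sublocale q: group_hom Ad Ad_Sq q
  by (simp add: group_hom_def group_hom_axioms_def Sq.r_coset_hom_Mod Ad_Sq.is_group Ad.is_group)

lemma q_eq_one: "g \<in> carrier Ad \<Longrightarrow> q g = \<one>\<^bsub>Ad_Sq\<^esub> \<Longrightarrow> g \<in> Sq"
  using Ad.coset_join1[OF _ _ Sq_subgroup] by simp

lemma q_e_square: "x \<in> Q \<Longrightarrow> q (e x \<otimes>\<^bsub>Ad\<^esub> e x) = \<one>\<^bsub>Ad_Sq\<^esub>"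
  using Ad.coset_join2[OF _ Sq_subgroup e_square_in_Sq] e_closed by simp

lemma q_e_involution: "x \<in> Q \<Longrightarrow> q (e x) \<otimes>\<^bsub>Ad_Sq\<^esub> q (e x) = \<one>\<^bsub>Ad_Sq\<^esub>"
  using q.hom_mult[OF e_closed e_closed] q_e_square by (simp del: mult_FactGroup one_FactGroup)

lemma q_e_reflect:
  assumes x: "x \<in> Q" and y: "y \<in> Q"
  shows "q (e y) \<otimes>\<^bsub>Ad_Sq\<^esub> q (e x) \<otimes>\<^bsub>Ad_Sq\<^esub> q (e y) = q (e (y \<otimes>\<^bsub>W\<^esub> x \<otimes>\<^bsub>W\<^esub> y))"
proof -
  have "e y \<otimes>\<^bsub>Ad\<^esub> e x \<otimes>\<^bsub>Ad\<^esub> e y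
      = (e y \<otimes>\<^bsub>Ad\<^esub> e x \<otimes>\<^bsub>Ad\<^esub> inv\<^bsub>Ad\<^esub> e y) \<otimes>\<^bsub>Ad\<^esub> (e y \<otimes>\<^bsub>Ad\<^esub> e y)"
    using e_closed x y by (simp add: Ad.m_assoc)
  also have "\<dots> = e (y \<otimes>\<^bsub>W\<^esub> x \<otimes>\<^bsub>W\<^esub> y) \<otimes>\<^bsub>Ad\<^esub> (e y \<otimes>\<^bsub>Ad\<^esub> e y)"
    using Ad_relation'[OF x y] by simp
  finally have "q (e y \<otimes>\<^bsub>Ad\<^esub> e x \<otimes>\<^bsub>Ad\<^esub> e y) = q (e (y \<otimes>\<^bsub>W\<^esub> x \<otimes>\<^bsub>W\<^esub> y))"
    using e_closed x y Q_reflect q_e_square[OF y]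
    by (simp del: mult_FactGroup one_FactGroup)
  then show ?thesis
    using e_closed x y by (simp del: mult_FactGroup one_FactGroup)
qed

sublocale reflections: involution_rep W Ad_Sq Q "\<lambda>x. q (e x)"
  by unfold_locales
    (auto simp: Q_closed Q_involution Q_reflect e_closed q_e_involution q_e_reflect
      simp del: mult_FactGroup one_FactGroup)

definition theta :: "('g \<times> bool) list set \<Rightarrow> _" where
  "theta = pres_lift Ad_Sq (\<lambda>s. q (e (gen s)))"

lemma theta_relator:
  assumes "r \<in> cox_rels S m" "r \<in> pres_words S"
  shows "word_eval Ad_Sq (\<lambda>s. q (e (gen s))) r = \<one>\<^bsub>Ad_Sq\<^esub>"
proof -
  obtain s t k where stk: "s \<in> S" "t \<in> S" "m s t = enat k"
    "r = concat (replicate k [(s, True), (t, True)])"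
    using assms(1) unfolding cox_rels_def by blast
  then have "word_eval Ad_Sq (\<lambda>s. q (e (gen s))) r = (q (e (gen s)) \<otimes>\<^bsub>Ad_Sq\<^esub> q (e (gen t))) [^]\<^bsub>Ad_Sq\<^esub> k"
    using e_closed gen_in_Q by (simp add: Ad_Sq.word_eval_replicate_pair)
  also have "\<dots> = \<one>\<^bsub>Ad_Sq\<^esub>"
    using reflections.braid_transfer[OF gen_in_Q[OF stk(1)] gen_in_Q[OF stk(2)] gen_braid[OF stk(1-3)]] .
  finally show ?thesis .
qed

lemma theta_hom: "theta \<in> hom W Ad_Sq"
  unfolding theta_def coxeter_group_def
  by (rule Ad_Sq.pres_lift_hom) (auto simp: theta_relator e_closed gen_in_Q)

lemma theta_gen: "s \<in> S \<Longrightarrow> theta (gen s) = q (e (gen s))"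
  unfolding theta_def
  by (rule Ad_Sq.pres_lift_gen) (auto simp: theta_relator e_closed gen_in_Q)

sublocale theta: group_hom W Ad_Sq theta
  by (simp add: group_hom_def group_hom_axioms_def theta_hom Ad_Sq.is_group W.is_group)

lemma theta_phi_lift_word:
  assumes u: "u \<in> pres_words S"
  shows "theta (\<phi> (word_eval Ad (e \<circ> gen) u)) = q (word_eval Ad (e \<circ> gen) u)"
proof -
  have gen_e: "(e \<circ> gen) ` S \<subseteq> carrier Ad" and gen_W: "gen ` S \<subseteq> carrier W"
    using e_closed gen_in_Q gen_closed by auto
  have "theta (\<phi> (word_eval Ad (e \<circ> gen) u)) = word_eval Ad_Sq (theta \<circ> gen) u"
    using phi_lift_word(2)[OF u] hom_word_eval[OF W.is_group Ad_Sq.is_group theta_hom gen_W u] by simp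
  also have "\<dots> = word_eval Ad_Sq (q \<circ> (e \<circ> gen)) u"
    by (rule word_eval_cong[OF _ u]) (simp add: theta_gen)
  also have "\<dots> = q (word_eval Ad (e \<circ> gen) u)"
    using hom_word_eval[OF Ad.is_group Ad_Sq.is_group q.homh gen_e u] by simp
  finally show ?thesis .
qed

lemma theta_phi_e:
  assumes x: "x \<in> Q"
  shows "theta (\<phi> (e x)) = q (e x)"
proof -
  obtain w s where ws: "w \<in> carrier W" "s \<in> S" "x = inv\<^bsub>W\<^esub> w \<otimes>\<^bsub>W\<^esub> gen s \<otimes>\<^bsub>W\<^esub> w"
    using x unfolding Q_iff by blast
  obtain u where u: "u \<in> pres_words S" "w = word_eval W gen u"
    using W_carrierE[OF ws(1)] .
  let ?g = "word_eval Ad (e \<circ> gen) u"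
  have g: "?g \<in> carrier Ad" "\<phi> ?g = w" "theta (\<phi> ?g) = q ?g"
    using phi_lift_word[OF u(1)] theta_phi_lift_word[OF u(1)] u(2) by auto
  have a: "e (gen s) \<in> carrier Ad" "theta (\<phi> (e (gen s))) = q (e (gen s))"
    using e_closed gen_in_Q phi_e theta_gen ws(2) by auto
  have "e x = inv\<^bsub>Ad\<^esub> ?g \<otimes>\<^bsub>Ad\<^esub> e (gen s) \<otimes>\<^bsub>Ad\<^esub> ?g"
    using Ad_conj[OF g(1) gen_in_Q[OF ws(2)]] g(2) ws(3) by simp
  then show ?thesis
    using g a ws(1,2) gen_closed by (simp del: mult_FactGroup one_FactGroup)
qed

lemma theta_phi: "g \<in> carrier Ad \<Longrightarrow> theta (\<phi> g) = q g"
proof (rule Ad_hom_unique[OF Ad_Sq.is_group _ q.homh])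
  show "(\<lambda>g. theta (\<phi> g)) \<in> hom Ad Ad_Sq"
    by (rule homI) simp_all
qed (use theta_phi_e in auto)

lemma C_W_subset_Sq: "C_W S m \<subseteq> Sq"
proof
  fix c
  assume "c \<in> C_W S m"
  then have c: "c \<in> carrier Ad" "\<phi> c = \<one>\<^bsub>W\<^esub>"
    using C_W_iff by auto
  then have "q c = \<one>\<^bsub>Ad_Sq\<^esub>"
    using theta_phi by force
  then show "c \<in> Sq"
    using q_eq_one c by blast
qed

lemma class_count_faithful:
  assumes "g \<in> C_W S m" "\<forall>k\<in>reflection_classes. class_count g k = 0"
  shows "g = \<one>\<^bsub>Ad\<^esub>"
proof -
  obtain a where a: "g = square_prod a"
    using assms(1) C_W_subset_Sq unfolding Sq_def by blast
  have "a k = 0" if "k \<in> reflection_classes" for k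
    using class_count_square_prod[OF that, of a] assms(2) that a by simp
  then show ?thesis
    using a square_prod_eq_one by blast
qed

theorem rank_C_W: "has_rank C (card reflection_classes)"
proof (rule C.has_rank_coordinates[OF finite_reflection_classes class_count_hom_C])
  show "\<And>g. g \<in> carrier C \<Longrightarrow> \<forall>k\<in>reflection_classes. class_count g k = 0 \<Longrightarrow> g = \<one>\<^bsub>C\<^esub>"
    using class_count_faithful by simp
  show "\<And>k. k \<in> reflection_classes \<Longrightarrow> class_square k \<in> carrier C"
    using class_square_C_W by simp
  show "\<And>k j. k \<in> reflection_classes \<Longrightarrow> class_count (class_square k) j = 0 \<longleftrightarrow> j \<noteq> k"
    by (simp add: class_count_class_square)
qed

end

theorem proposition3p2:
  fixes S :: "'g set" and m :: "'g \<Rightarrow> 'g \<Rightarrow> enat"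
  assumes "coxeter_system S m"
  shows "has_rank ((adjoint_group S m)\<lparr>carrier := C_W S m\<rparr>)
           (card (conj_class (coxeter_group S m) ` coxeter_quandle S m))"
proof -
  interpret coxeter S m
    using assms by unfold_locales
  show ?thesis
    using rank_C_W unfolding reflection_classes_def .
qed

end
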